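(* Let $W$ be a finite Weyl group, $w\in W$, and $U\subseteq V$ a subspace. If $\mathcal{I}(w)$ is supersolvable, then $\mathcal{I}(\mathrm{fl}_U(w))$ is supersolvable.
   Context: $W$ is a finite Weyl group with root system $R\subset V$, positive roots $R^+$, negative roots $R^-$; $I(w)=\{\alpha\in R^+:w^{-1}\alpha\in R^-\}$, $\mathcal{I}(w)$ the arrangement of hyperplanes $\ker\alpha$, $\alpha\in I(w)$. $R_U=R\cap U$ is a root system with Weyl group $W_U$; $\mathrm{fl}_U(w)\in W_U$ is the unique element whose inversion set (w.r.t. positive roots $R^+\cap U$) is $I(w)\cap U$. A central arrangement is supersolvable if its intersection lattice (flats ordered by reverse inclusion) has a maximal chain of modular elements, where a flat $X$ is modular if $\mathrm{rk}(X)+\mathrm{rk}(Y)=\mathrm{rk}(X\wedge Y)+\mathrm{rk}(X\vee Y)$ for all flats $Y$. *)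

theory Defs
  imports "HOL-Analysis.Analysis"
begin

definition refl :: "'a::euclidean_space \<Rightarrow> 'a \<Rightarrow> 'a" where
  "refl \<alpha> x = x - (2 * (x \<bullet> \<alpha>) / (\<alpha> \<bullet> \<alpha>)) *\<^sub>R \<alpha>"

text \<open>A finite, reduced, crystallographic root system in the ambient Euclidean space V
  (not required to span V).\<close>
definition root_system :: "'a::euclidean_space set \<Rightarrow> bool" where
  "root_system R \<longleftrightarrow> finite R \<and> 0 \<notin> R
     \<and> (\<forall>\<alpha>\<in>R. \<forall>\<beta>\<in>R. refl \<alpha> \<beta> \<in> R)
     \<and> (\<forall>\<alpha>\<in>R. \<forall>\<beta>\<in>R. 2 * (\<beta> \<bullet> \<alpha>) / (\<alpha> \<bullet> \<alpha>) \<in> \<int>)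
     \<and> (\<forall>\<alpha>\<in>R. \<forall>c::real. c *\<^sub>R \<alpha> \<in> R \<longrightarrow> c = 1 \<or> c = -1)"

definition positive_system :: "'a::euclidean_space set \<Rightarrow> 'a set \<Rightarrow> bool" where
  "positive_system R P \<longleftrightarrow>
     (\<exists>c. (\<forall>\<alpha>\<in>R. c \<bullet> \<alpha> \<noteq> 0) \<and> P = {\<alpha>\<in>R. c \<bullet> \<alpha> > 0})"

inductive_set weyl :: "'a::euclidean_space set \<Rightarrow> ('a \<Rightarrow> 'a) set" for R where
  weyl_id: "id \<in> weyl R"
| weyl_step: "\<alpha> \<in> R \<Longrightarrow> w \<in> weyl R \<Longrightarrow> refl \<alpha> \<circ> w \<in> weyl R"

definition inv_set :: "'a::euclidean_space set \<Rightarrow> ('a \<Rightarrow> 'a) \<Rightarrow> 'a set" where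
  "inv_set P w = {\<alpha>\<in>P. inv w \<alpha> \<in> uminus ` P}"

definition flat_U :: "'a::euclidean_space set \<Rightarrow> 'a set \<Rightarrow> 'a set \<Rightarrow> ('a \<Rightarrow> 'a) \<Rightarrow> ('a \<Rightarrow> 'a)" where
  "flat_U R P U w = (THE v. v \<in> weyl (R \<inter> U) \<and> inv_set (P \<inter> U) v = inv_set P w \<inter> U)"

definition hyperplane :: "'a::euclidean_space \<Rightarrow> 'a set" where
  "hyperplane \<alpha> = {x. \<alpha> \<bullet> x = 0}"

definition inv_arrangement :: "'a::euclidean_space set \<Rightarrow> ('a \<Rightarrow> 'a) \<Rightarrow> 'a set set" where
  "inv_arrangement P w = hyperplane ` inv_set P w"

definition flats :: "'a::euclidean_space set set \<Rightarrow> 'a set set" where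
  "flats A = {\<Inter>S | S. S \<subseteq> A}"

definition rk :: "'a::euclidean_space set \<Rightarrow> nat" where
  "rk X = DIM('a) - dim X"

text \<open>Lattice operations w.r.t. reverse inclusion: join is intersection,
  meet is the smallest flat containing both.\<close>
definition flat_join :: "'a::euclidean_space set \<Rightarrow> 'a set \<Rightarrow> 'a set" where
  "flat_join X Y = X \<inter> Y"

definition flat_meet :: "'a::euclidean_space set set \<Rightarrow> 'a set \<Rightarrow> 'a set \<Rightarrow> 'a set" where
  "flat_meet A X Y = \<Inter>{Z \<in> flats A. X \<union> Y \<subseteq> Z}"

definition modular_flat :: "'a::euclidean_space set set \<Rightarrow> 'a set \<Rightarrow> bool" where
  "modular_flat A X \<longleftrightarrow> X \<in> flats A \<and>
     (\<forall>Y\<in>flats A. rk X + rk Y = rk (flat_meet A X Y) + rk (flat_join X Y))"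

definition flat_chain :: "'a set set \<Rightarrow> bool" where
  "flat_chain C \<longleftrightarrow> (\<forall>X\<in>C. \<forall>Y\<in>C. X \<subseteq> Y \<or> Y \<subseteq> X)"

definition maximal_chain :: "'a::euclidean_space set set \<Rightarrow> 'a set set \<Rightarrow> bool" where
  "maximal_chain A C \<longleftrightarrow> C \<subseteq> flats A \<and> flat_chain C \<and>
     (\<forall>C'. C \<subseteq> C' \<and> C' \<subseteq> flats A \<and> flat_chain C' \<longrightarrow> C' = C)"

definition supersolvable :: "'a::euclidean_space set set \<Rightarrow> bool" where
  "supersolvable A \<longleftrightarrow> (\<exists>C. maximal_chain A C \<and> (\<forall>X\<in>C. modular_flat A X))"

end

theory Submission
  imports Defs
begin

text \<open>
  The argument has two independent halves.
  (1) Root systems: for a positive system P = {a \<in> R. c \<bullet> a > 0} we develop simple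
  roots and show that W acts simply transitively on chambers; the inversion set of v \<in> W is
  {a \<in> P. v c \<bullet> a < 0}.  Since R \<inter> U is again a root system with positive system
  P \<inter> U (for the same c), fl_U(w) is the unique element of W_U whose chamber contains w c,
  so its inversion set is I(w) \<inter> U (lemma flat_U_inversions).
  (2) Arrangements: if B \<subseteq> A contains every hyperplane of A through \<Inter>B (B is a
  localization of A), then B is supersolvable whenever A is: adding \<Inter>B to the members of a
  modular maximal chain of A yields a modular maximal chain of B
  (lemma localization_supersolvable).
  The main theorem combines them: the hyperplanes of I(w) \<inter> U form a localization of I(w),
  because a root orthogonal to the common kernel of I(w) \<inter> U lies in the span of I(w) \<inter> U.
\<close>

section \<open>Reflections\<close>

lemma refl_involution: assumes "a \<noteq> 0" shows "refl a (refl a x) = x"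
proof -
  have aa: "a \<bullet> a \<noteq> 0" using assms by simp
  have "refl a x \<bullet> a = - (x \<bullet> a)"
    using aa by (simp add: refl_def inner_diff_left)
  then have "refl a (refl a x) = refl a x + (2 * (x \<bullet> a) / (a \<bullet> a)) *\<^sub>R a"
    by (simp add: refl_def[of a "refl a x"])
  then show ?thesis by (simp add: refl_def)
qed

lemma refl_inner: assumes "a \<noteq> 0" shows "refl a x \<bullet> refl a y = x \<bullet> y"
proof -
  have aa: "a \<bullet> a \<noteq> 0" using assms by simp
  define kx where "kx = 2 * (x \<bullet> a) / (a \<bullet> a)"
  define ky where "ky = 2 * (y \<bullet> a) / (a \<bullet> a)"
  have "refl a x \<bullet> refl a y = x \<bullet> y - ky * (x \<bullet> a) - kx * (a \<bullet> y) + kx * ky * (a \<bullet> a)"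
    unfolding refl_def kx_def[symmetric] ky_def[symmetric]
    by (simp add: inner_diff_left inner_diff_right algebra_simps)
  moreover have "kx * ky * (a \<bullet> a) = 2 * (y \<bullet> a) * kx" "ky * (x \<bullet> a) = kx * (y \<bullet> a)"
    unfolding kx_def ky_def using aa by (simp_all add: field_simps)
  ultimately show ?thesis by (simp add: inner_commute)
qed

lemma refl_adjoint: "a \<noteq> 0 \<Longrightarrow> refl a x \<bullet> y = x \<bullet> refl a y"
  by (metis refl_inner refl_involution)

lemma refl_self: assumes "a \<noteq> 0" shows "refl a a = - a"
  using assms by (simp add: refl_def scaleR_2)

lemma refl_uminus: "refl (- a) = refl a"
  by (rule ext) (simp add: refl_def)

lemma refl_linear: "linear (refl a)"
  by (rule linearI) (simp_all add: refl_def inner_add_left add_divide_distrib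
      distrib_left scaleR_add_left scaleR_diff_right)

lemma refl_orthogonal: "a \<noteq> 0 \<Longrightarrow> orthogonal_transformation (refl a)"
  unfolding orthogonal_transformation_def using refl_linear refl_inner by blast

lemma refl_conj:
  assumes z: "orthogonal_transformation z"
  shows "refl (z b) (z x) = z (refl b x)"
proof -
  have l: "linear z" and i: "\<And>u v. z u \<bullet> z v = u \<bullet> v"
    using z orthogonal_transformation_def by blast+
  show ?thesis unfolding refl_def using i linear_diff[OF l] linear_scale[OF l] by simp
qed

fun rword :: "'a::euclidean_space list \<Rightarrow> 'a \<Rightarrow> 'a" where
  "rword [] = id"
| "rword (a # l) = refl a \<circ> rword l"

lemma rword_append: "rword (l1 @ l2) = rword l1 \<circ> rword l2"
  by (induction l1) auto

lemma rword_orthogonal: "0 \<notin> set l \<Longrightarrow> orthogonal_transformation (rword l)"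
  by (induction l) (auto simp: id_def intro: orthogonal_transformation_compose refl_orthogonal)

lemma rword_rev: "0 \<notin> set l \<Longrightarrow> rword (rev l) (rword l x) = x \<and> rword l (rword (rev l) x) = x"
proof (induction l arbitrary: x)
  case Nil then show ?case by simp
next
  case (Cons a l)
  then have "a \<noteq> 0" "0 \<notin> set l" by auto
  with Cons.IH show ?case by (simp add: rword_append refl_involution)
qed

lemma inv_rword: "0 \<notin> set l \<Longrightarrow> inv (rword l) = rword (rev l)"
  using rword_rev by (intro inv_unique_comp) (auto simp: fun_eq_iff)

lemma rword_closed:
  "(\<And>a b. a \<in> R \<Longrightarrow> b \<in> R \<Longrightarrow> refl a b \<in> R) \<Longrightarrow> set l \<subseteq> R \<Longrightarrow> x \<in> R \<Longrightarrow> rword l x \<in> R"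
  by (induction l) auto

lemma weyl_rword: "v \<in> weyl R \<Longrightarrow> \<exists>l. set l \<subseteq> R \<and> v = rword l"
proof (induction rule: weyl.induct)
  case weyl_id then show ?case by (intro exI[of _ "[]"]) simp
next
  case (weyl_step \<alpha> w)
  then obtain l where "set l \<subseteq> R" "w = rword l" by blast
  then show ?case using weyl_step by (intro exI[of _ "\<alpha> # l"]) simp
qed

section \<open>Positive systems, simple roots and chambers\<close>

locale pos_root_system =
  fixes R P :: "'a::euclidean_space set" and c :: 'a
  assumes finite_roots: "finite R" and zero_notin: "0 \<notin> R"
    and refl_closed: "\<And>a b. a \<in> R \<Longrightarrow> b \<in> R \<Longrightarrow> refl a b \<in> R"
    and cartan_int: "\<And>a b. a \<in> R \<Longrightarrow> b \<in> R \<Longrightarrow> 2 * (b \<bullet> a) / (a \<bullet> a) \<in> \<int>"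
    and reduced: "\<And>a t. a \<in> R \<Longrightarrow> t *\<^sub>R a \<in> R \<Longrightarrow> t = 1 \<or> t = -1"
    and generic: "\<And>a. a \<in> R \<Longrightarrow> c \<bullet> a \<noteq> 0"
    and P_def: "P = {a \<in> R. c \<bullet> a > 0}"
begin

lemma root_nonzero: "a \<in> R \<Longrightarrow> a \<noteq> 0"
  using zero_notin by blast

lemma word_nonzero: "set l \<subseteq> R \<Longrightarrow> 0 \<notin> set l"
  using zero_notin by blast

lemma neg_root: "a \<in> R \<Longrightarrow> - a \<in> R"
  using refl_closed[of a a] refl_self[of a] zero_notin by force

lemma pos_roots: "P \<subseteq> R"
  using P_def by blast

lemma pos_inner: "a \<in> P \<Longrightarrow> c \<bullet> a > 0"
  using P_def by blast

lemma root_cases: "a \<in> R \<Longrightarrow> a \<notin> P \<Longrightarrow> - a \<in> P"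
  using P_def generic neg_root by force

lemma pos_not_neg: "a \<in> P \<Longrightarrow> - a \<notin> P"
  using P_def by auto

lemma pos_induct[consumes 1, case_names step]:
  assumes "b \<in> P"
    and step: "\<And>b. b \<in> P \<Longrightarrow> (\<And>g. g \<in> P \<Longrightarrow> c \<bullet> g < c \<bullet> b \<Longrightarrow> Q g) \<Longrightarrow> Q b"
  shows "Q b"
  using assms(1)
proof (induction "card {g\<in>P. c \<bullet> g < c \<bullet> b}" arbitrary: b rule: less_induct)
  case less
  show ?case
  proof (rule step[OF less.prems])
    fix g assume g: "g \<in> P" "c \<bullet> g < c \<bullet> b"
    have "{h\<in>P. c \<bullet> h < c \<bullet> g} \<subset> {h\<in>P. c \<bullet> h < c \<bullet> b}" using g by auto
    moreover have "finite {h\<in>P. c \<bullet> h < c \<bullet> b}"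
      using finite_roots pos_roots by (auto intro: finite_subset)
    ultimately show "Q g" using less.hyps g(1) by (meson psubset_card_mono)
  qed
qed

lemma rword_root: "set l \<subseteq> R \<Longrightarrow> x \<in> R \<Longrightarrow> rword l x \<in> R"
  by (rule rword_closed[OF refl_closed])

lemma rword_inner: "set l \<subseteq> R \<Longrightarrow> rword l x \<bullet> rword l y = x \<bullet> y"
  using rword_orthogonal[OF word_nonzero] unfolding orthogonal_transformation_def by blast

definition simple :: "'a set" where
  "simple = {a \<in> P. \<not> (\<exists>b\<in>P. \<exists>g\<in>P. a = b + g)}"

lemma simple_pos: "simple \<subseteq> P"
  unfolding simple_def by blast

lemma simple_roots: "simple \<subseteq> R"
  using simple_pos pos_roots by blast

lemma finite_simple: "finite simple"
  using finite_roots simple_roots by (rule finite_subset[rotated])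

lemma pos_cone: "b \<in> P \<Longrightarrow> \<exists>f. (\<forall>d. 0 \<le> f d) \<and> b = (\<Sum>d\<in>simple. f d *\<^sub>R d)"
proof (induction rule: pos_induct)
  case (step b)
  show ?case
  proof (cases "b \<in> simple")
    case True
    have "(\<Sum>d\<in>simple. (if d = b then 1 else 0) *\<^sub>R d) = b"
      using True finite_simple by (simp add: if_distrib[of "\<lambda>t. t *\<^sub>R _"] cong: if_cong)
    then show ?thesis by (intro exI[of _ "\<lambda>d. if d = b then 1 else 0"]) auto
  next
    case False
    then obtain b1 b2 where bb: "b1 \<in> P" "b2 \<in> P" "b = b1 + b2"
      using step unfolding simple_def by blast
    have "c \<bullet> b1 < c \<bullet> b" "c \<bullet> b2 < c \<bullet> b"
      using bb pos_inner[of b1] pos_inner[of b2] by (auto simp: inner_add_right)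
    then obtain f1 f2 where f1: "\<forall>d. 0 \<le> f1 d" "b1 = (\<Sum>d\<in>simple. f1 d *\<^sub>R d)"
      and f2: "\<forall>d. 0 \<le> f2 d" "b2 = (\<Sum>d\<in>simple. f2 d *\<^sub>R d)" using step bb by meson
    have "b = (\<Sum>d\<in>simple. (f1 d + f2 d) *\<^sub>R d)"
      using bb f1 f2 by (simp add: scaleR_add_left sum.distrib)
    then show ?thesis using f1 f2 by (intro exI[of _ "\<lambda>d. f1 d + f2 d"]) auto
  qed
qed

text \<open>If two distinct roots form an acute angle, their difference is a root: one of the
  Cartan integers is 1 (so a reflection produces the difference), or both are at least 2,
  which forces a = b.\<close>
lemma acute_root_difference:
  assumes aR: "a \<in> R" and bR: "b \<in> R" and ab: "a \<noteq> b" and pos: "a \<bullet> b > 0"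
  shows "a - b \<in> R"
proof -
  have aa: "a \<bullet> a > 0" and bb: "b \<bullet> b > 0" using root_nonzero aR bR by auto
  have int_cases: "x = 1 \<or> x \<ge> 2" if "x \<in> \<int>" "x > 0" for x :: real
    using that by (elim Ints_cases) auto
  have p1: "2 * (a \<bullet> b) / (b \<bullet> b) > 0" using pos bb by simp
  have p2: "2 * (b \<bullet> a) / (a \<bullet> a) > 0" using pos aa by (simp add: inner_commute)
  consider "2 * (a \<bullet> b) / (b \<bullet> b) = 1" | "2 * (b \<bullet> a) / (a \<bullet> a) = 1"
    | "2 * (a \<bullet> b) / (b \<bullet> b) \<ge> 2 \<and> 2 * (b \<bullet> a) / (a \<bullet> a) \<ge> 2"
    using int_cases[OF cartan_int[OF bR aR] p1] int_cases[OF cartan_int[OF aR bR] p2] by blast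
  then show ?thesis
  proof cases
    case 1
    then have "refl b a = a - b" by (simp only: refl_def scaleR_one)
    then show ?thesis using refl_closed[OF bR aR] by simp
  next
    case 2
    then have "refl a b = b - a" by (simp only: refl_def scaleR_one)
    then show ?thesis using refl_closed[OF aR bR] neg_root by fastforce
  next
    case 3
    then have "b \<bullet> b \<le> a \<bullet> b" "a \<bullet> a \<le> a \<bullet> b"
      using aa bb by (auto simp: field_simps inner_commute)
    then have "(a - b) \<bullet> (a - b) \<le> 0"
      by (simp add: inner_diff_left inner_diff_right inner_commute)
    then have "a - b = 0" by (metis inner_gt_zero_iff not_less)
    then show ?thesis using ab by simp
  qed
qed

text \<open>Distinct simple roots form an obtuse angle: otherwise their difference would be a
  root, and one of them would be a sum of two positive roots.\<close>
lemma simple_obtuse: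
  assumes a: "a \<in> simple" and b: "b \<in> simple" and ab: "a \<noteq> b"
  shows "a \<bullet> b \<le> 0"
proof (rule ccontr)
  assume "\<not> a \<bullet> b \<le> 0"
  moreover have "a \<in> R" "b \<in> R" using a b simple_roots by auto
  ultimately have "a - b \<in> R" using acute_root_difference ab by simp
  then consider "a - b \<in> P" | "b - a \<in> P" using root_cases by fastforce
  then show False
  proof cases
    case 1
    have "a = b + (a - b)" by simp
    then show False using a b 1 simple_pos unfolding simple_def by blast
  next
    case 2
    have "b = a + (b - a)" by simp
    then show False using a b 2 simple_pos unfolding simple_def by blast
  qed
qed

text \<open>If a nonnegative combination of simple roots is a multiple of the simple root a,
  then only a occurs in it: pair with a (obtuse angles) and with c (positivity).\<close>
lemma simple_combination_multiple:
  assumes a: "a \<in> simple" and h0: "\<forall>d. 0 \<le> h d"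
    and hs: "(\<Sum>d\<in>simple. h d *\<^sub>R d) = k *\<^sub>R a"
  shows "\<forall>d\<in>simple - {a}. h d = 0"
proof (rule ccontr)
  assume "\<not> ?thesis"
  then obtain d where d: "d \<in> simple - {a}" "h d \<noteq> 0" by blast
  then have hd: "h d > 0" using h0 by (simp add: less_le)
  define S where "S = (\<Sum>d\<in>simple - {a}. h d *\<^sub>R d)"
  have "(\<Sum>d\<in>simple. h d *\<^sub>R d) = h a *\<^sub>R a + S"
    unfolding S_def using a finite_simple by (simp add: sum.remove)
  then have S: "S = (k - h a) *\<^sub>R a" using hs by (simp add: algebra_simps)
  have "S \<bullet> a = (\<Sum>d\<in>simple - {a}. h d * (d \<bullet> a))"
    unfolding S_def by (simp add: inner_sum_left)
  also have "\<dots> \<le> 0"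
    using simple_obtuse a h0 by (intro sum_nonpos) (simp add: mult_nonneg_nonpos)
  finally have "(k - h a) * (a \<bullet> a) \<le> 0" using S by simp
  moreover have "a \<bullet> a > 0" using a simple_roots root_nonzero by auto
  ultimately have kh: "k - h a \<le> 0" by (simp add: mult_le_0_iff)
  have "c \<bullet> S = (\<Sum>d\<in>simple - {a}. h d * (c \<bullet> d))"
    unfolding S_def by (simp add: inner_sum_right)
  also have "\<dots> > 0"
  proof (rule sum_pos2)
    show "finite (simple - {a})" using finite_simple by simp
    show "d \<in> simple - {a}" "0 < h d * (c \<bullet> d)"
      using d hd pos_inner simple_pos by auto
    show "\<And>i. i \<in> simple - {a} \<Longrightarrow> 0 \<le> h i * (c \<bullet> i)"
      using h0 pos_inner simple_pos by (simp add: less_imp_le subset_iff)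
  qed
  finally have "0 < (k - h a) * (c \<bullet> a)" using S by simp
  moreover have "c \<bullet> a > 0" using a pos_inner simple_pos by blast
  ultimately show False using kh by (simp add: zero_less_mult_iff)
qed

lemma simple_refl_pos:
  assumes a: "a \<in> simple" and b: "b \<in> P" and ba: "b \<noteq> a"
  shows "refl a b \<in> P"
proof (rule ccontr)
  assume "refl a b \<notin> P"
  have aR: "a \<in> R" and bR: "b \<in> R" using a b simple_roots pos_roots by auto
  define k where "k = 2 * (b \<bullet> a) / (a \<bullet> a)"
  have rb: "refl a b = b - k *\<^sub>R a" unfolding refl_def k_def by simp
  have "- refl a b \<in> P" using root_cases[OF refl_closed[OF aR bR]] \<open>refl a b \<notin> P\<close> by blast
  obtain f where f: "\<forall>d. 0 \<le> f d" "b = (\<Sum>d\<in>simple. f d *\<^sub>R d)" using pos_cone[OF b] by blast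
  obtain g where g: "\<forall>d. 0 \<le> g d" "- refl a b = (\<Sum>d\<in>simple. g d *\<^sub>R d)"
    using pos_cone[OF \<open>- refl a b \<in> P\<close>] by blast
  have "(\<Sum>d\<in>simple. (f d + g d) *\<^sub>R d) = b + (- refl a b)"
    using f g by (simp add: scaleR_add_left sum.distrib)
  also have "\<dots> = k *\<^sub>R a" using rb by simp
  finally have fg: "(\<Sum>d\<in>simple. (f d + g d) *\<^sub>R d) = k *\<^sub>R a" .
  have "\<forall>d. 0 \<le> f d + g d" using f(1) g(1) by (simp add: add_nonneg_nonneg)
  then have "\<forall>d\<in>simple - {a}. f d + g d = 0"
    using simple_combination_multiple[OF a _ fg] by blast
  then have "\<forall>d\<in>simple - {a}. f d = 0" using f(1) g(1) by (simp add: add_nonneg_eq_0_iff)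
  then have "(\<Sum>d\<in>simple - {a}. f d *\<^sub>R d) = 0" by simp
  moreover have "b = f a *\<^sub>R a + (\<Sum>d\<in>simple - {a}. f d *\<^sub>R d)"
    using f(2) a finite_simple by (simp add: sum.remove)
  ultimately have "b = f a *\<^sub>R a" by simp
  then have "f a = 1 \<or> f a = -1" using reduced[OF aR] bR by simp
  moreover have "- a \<notin> P" using pos_not_neg a simple_pos by blast
  ultimately show False using \<open>b = f a *\<^sub>R a\<close> ba b by auto
qed

lemma pos_descent:
  assumes b: "b \<in> P" and ns: "b \<notin> simple"
  obtains d where "d \<in> simple" "refl d b \<in> P" "c \<bullet> refl d b < c \<bullet> b"
proof -
  obtain f where f: "\<forall>d. 0 \<le> f d" "b = (\<Sum>d\<in>simple. f d *\<^sub>R d)" using pos_cone[OF b] by blast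
  have "0 < b \<bullet> b" using root_nonzero b pos_roots by auto
  also have "b \<bullet> b = (\<Sum>d\<in>simple. f d * (d \<bullet> b))"
    by (subst (1) f(2)) (simp add: inner_sum_left)
  finally have "\<not> (\<forall>d\<in>simple. f d * (d \<bullet> b) \<le> 0)"
    using sum_nonpos[of simple "\<lambda>d. f d * (d \<bullet> b)"] by (meson not_le)
  then obtain d where d: "d \<in> simple" "f d * (d \<bullet> b) > 0" by (auto simp: not_le)
  have db: "d \<bullet> b > 0" using d(2) f(1) by (metis zero_less_mult_iff not_le)
  have dd: "d \<bullet> d > 0" using root_nonzero d simple_roots by auto
  have cd: "c \<bullet> d > 0" using pos_inner d(1) simple_pos by blast
  have "c \<bullet> refl d b = c \<bullet> b - (2 * (b \<bullet> d) / (d \<bullet> d)) * (c \<bullet> d)"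
    unfolding refl_def by (simp add: inner_diff_right)
  moreover have "(2 * (b \<bullet> d) / (d \<bullet> d)) * (c \<bullet> d) > 0"
    using db dd cd by (simp add: inner_commute)
  ultimately have "c \<bullet> refl d b < c \<bullet> b" by linarith
  moreover have "refl d b \<in> P" using simple_refl_pos[OF d(1) b] ns d(1) by blast
  ultimately show ?thesis using d(1) that by blast
qed

lemma pos_conj_simple:
  assumes "b \<in> P" shows "\<exists>l d. set l \<subseteq> simple \<and> d \<in> simple \<and> b = rword l d"
  using assms
proof (induction rule: pos_induct)
  case (step b)
  show ?case
  proof (cases "b \<in> simple")
    case True then show ?thesis by (intro exI[of _ "[]"] exI[of _ b]) simp
  next
    case False
    then obtain d where d: "d \<in> simple" "refl d b \<in> P" "c \<bullet> refl d b < c \<bullet> b"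
      using pos_descent step.hyps by blast
    then obtain l d' where l: "set l \<subseteq> simple" "d' \<in> simple" "refl d b = rword l d'"
      using step.IH by blast
    have "d \<noteq> 0" using d(1) simple_roots root_nonzero by blast
    then have "b = refl d (refl d b)" by (simp add: refl_involution)
    then have "b = rword (d # l) d'" using l by simp
    then show ?thesis using l d by (intro exI[of _ "d # l"] exI[of _ d']) auto
  qed
qed

lemma refl_simple_word: assumes "b \<in> R" shows "\<exists>l. set l \<subseteq> simple \<and> refl b = rword l"
proof -
  obtain b' where b': "b' \<in> P" "refl b = refl b'"
    using root_cases[OF assms] refl_uminus[of b] by metis
  obtain l d where l: "set l \<subseteq> simple" "d \<in> simple" "b' = rword l d"
    using pos_conj_simple[OF b'(1)] by blast
  have l0: "0 \<notin> set l" using l(1) simple_roots word_nonzero by blast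
  have "refl b' = rword (l @ [d] @ rev l)"
  proof
    fix x
    have "refl b' x = refl (rword l d) (rword l (rword (rev l) x))"
      using l(3) rword_rev[OF l0] by simp
    also have "\<dots> = rword l (refl d (rword (rev l) x))"
      using refl_conj[OF rword_orthogonal[OF l0]] by simp
    finally show "refl b' x = rword (l @ [d] @ rev l) x" by (simp add: rword_append)
  qed
  then show ?thesis using b' l by (intro exI[of _ "l @ [d] @ rev l"]) auto
qed

lemma weyl_simple_word: "v \<in> weyl R \<Longrightarrow> \<exists>l. set l \<subseteq> simple \<and> v = rword l"
proof (induction rule: weyl.induct)
  case weyl_id then show ?case by (intro exI[of _ "[]"]) simp
next
  case (weyl_step a w)
  then obtain l l1 where "set l \<subseteq> simple" "w = rword l" "set l1 \<subseteq> simple" "refl a = rword l1"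
    using refl_simple_word by blast
  then show ?case by (intro exI[of _ "l1 @ l"]) (simp add: rword_append)
qed

lemma deletion:
  assumes "set l \<subseteq> simple" "a \<in> simple" "rword l a \<notin> P"
  shows "\<exists>l'. length l' + 1 = length l \<and> set l' \<subseteq> set l \<and> rword l \<circ> refl a = rword l'"
  using assms
proof (induction l)
  case Nil then show ?case using simple_pos by auto
next
  case (Cons b l)
  have bs: "b \<in> simple" and ls: "set l \<subseteq> simple" using Cons.prems by auto
  show ?case
  proof (cases "rword l a \<in> P")
    case False
    then obtain l' where l': "length l' + 1 = length l" "set l' \<subseteq> set l"
        "rword l \<circ> refl a = rword l'"
      using Cons.IH ls Cons.prems(2) by blast
    then have "rword (b # l) \<circ> refl a = rword (b # l')" by (metis rword.simps(2) comp_assoc)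
    moreover have "length (b # l') + 1 = length (b # l)" "set (b # l') \<subseteq> set (b # l)"
      using l' by auto
    ultimately show ?thesis by blast
  next
    case True
    have "refl b (rword l a) \<notin> P" using Cons.prems(3) by simp
    then have e: "rword l a = b" using simple_refl_pos[OF bs True] by blast
    have z: "orthogonal_transformation (rword l)"
      using rword_orthogonal ls simple_roots word_nonzero by blast
    have a0: "a \<noteq> 0" using Cons.prems(2) simple_roots root_nonzero by blast
    have "rword (b # l) \<circ> refl a = rword l"
    proof
      fix x
      have "(rword (b # l) \<circ> refl a) x = refl (rword l a) (rword l (refl a x))" using e by simp
      also have "\<dots> = rword l x" using refl_conj[OF z] refl_involution[OF a0] by simp
      finally show "(rword (b # l) \<circ> refl a) x = rword l x" .
    qed
    moreover have "length l + 1 = length (b # l)" "set l \<subseteq> set (b # l)" by auto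
    ultimately show ?thesis by blast
  qed
qed

lemma word_stabilizing_pos:
  assumes "set l \<subseteq> simple" "\<forall>b\<in>P. rword l b \<in> P"
  shows "rword l = id"
  using assms
proof (induction "length l" arbitrary: l rule: less_induct)
  case less
  show ?case
  proof (cases l rule: rev_exhaust)
    case Nil then show ?thesis by simp
  next
    case (snoc l0 a)
    have a: "a \<in> simple" and l0: "set l0 \<subseteq> simple" using less.prems snoc by auto
    have a0: "a \<noteq> 0" using a simple_roots root_nonzero by blast
    have lin: "linear (rword l0)"
      using rword_orthogonal l0 simple_roots word_nonzero orthogonal_transformation_def by blast
    have "rword l a = - rword l0 a"
      using snoc refl_self[OF a0] linear_neg[OF lin] by (simp add: rword_append)
    moreover have "rword l a \<in> P" using less.prems(2) a simple_pos by blast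
    ultimately have "rword l0 a \<notin> P" using pos_not_neg by fastforce
    then obtain l' where l': "length l' + 1 = length l0" "set l' \<subseteq> set l0"
        "rword l0 \<circ> refl a = rword l'"
      using deletion[OF l0 a] by blast
    have e: "rword l = rword l'" using snoc l' by (simp add: rword_append)
    then show ?thesis using less.hyps[of l'] l' l0 less.prems(2) snoc by auto
  qed
qed

lemma same_chamber_iff:
  assumes g1: "\<forall>a\<in>R. d1 \<bullet> a \<noteq> 0" and g2: "\<forall>a\<in>R. d2 \<bullet> a \<noteq> 0"
  shows "{a\<in>P. d1 \<bullet> a < 0} = {a\<in>P. d2 \<bullet> a < 0} \<longleftrightarrow> (\<forall>a\<in>R. 0 < d1 \<bullet> a \<longleftrightarrow> 0 < d2 \<bullet> a)"
proof
  assume eq: "{a\<in>P. d1 \<bullet> a < 0} = {a\<in>P. d2 \<bullet> a < 0}"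
  have pos: "0 < d1 \<bullet> a \<longleftrightarrow> 0 < d2 \<bullet> a" if "a \<in> P" for a
  proof -
    have "a \<in> R" using that pos_roots by blast
    moreover have "d1 \<bullet> a < 0 \<longleftrightarrow> d2 \<bullet> a < 0" using eq that by blast
    ultimately show ?thesis using g1 g2 by (meson linorder_neqE_linordered_idom not_less_iff_gr_or_eq)
  qed
  show "\<forall>a\<in>R. 0 < d1 \<bullet> a \<longleftrightarrow> 0 < d2 \<bullet> a"
  proof
    fix a assume aR: "a \<in> R"
    show "0 < d1 \<bullet> a \<longleftrightarrow> 0 < d2 \<bullet> a"
    proof (cases "a \<in> P")
      case True then show ?thesis using pos by blast
    next
      case False
      then have "0 < d1 \<bullet> (-a) \<longleftrightarrow> 0 < d2 \<bullet> (-a)" using pos root_cases aR by blast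
      then show ?thesis using g1 g2 aR
        by (simp add: inner_minus_right) (meson linorder_neqE_linordered_idom not_less_iff_gr_or_eq)
    qed
  qed
next
  assume "\<forall>a\<in>R. 0 < d1 \<bullet> a \<longleftrightarrow> 0 < d2 \<bullet> a"
  then show "{a\<in>P. d1 \<bullet> a < 0} = {a\<in>P. d2 \<bullet> a < 0}"
    using g1 g2 pos_roots by (auto, (meson linorder_neqE_linordered_idom not_less_iff_gr_or_eq subsetD)+)
qed

lemma weyl_generic: assumes "v \<in> weyl R" shows "\<forall>a\<in>R. v c \<bullet> a \<noteq> 0"
proof
  fix a assume aR: "a \<in> R"
  obtain l where l: "set l \<subseteq> R" "v = rword l" using weyl_rword[OF assms] by blast
  have "v c \<bullet> a = rword l c \<bullet> rword l (rword (rev l) a)"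
    using l rword_rev[OF word_nonzero[OF l(1)]] by simp
  also have "\<dots> = c \<bullet> rword (rev l) a" using rword_inner[OF l(1)] .
  finally show "v c \<bullet> a \<noteq> 0" using generic rword_root[of "rev l" a] l aR by simp
qed

lemma inv_set_weyl:
  assumes "v \<in> weyl R" shows "inv_set P v = {a\<in>P. v c \<bullet> a < 0}"
proof -
  obtain l where l: "set l \<subseteq> R" "v = rword l" using weyl_rword[OF assms] by blast
  have l0: "0 \<notin> set l" using word_nonzero[OF l(1)] .
  have "rword (rev l) a \<in> uminus ` P \<longleftrightarrow> v c \<bullet> a < 0" if a: "a \<in> P" for a
  proof -
    define x where "x = rword (rev l) a"
    have xR: "x \<in> R" unfolding x_def using rword_root l(1) a pos_roots by auto
    have "v c \<bullet> a = rword l c \<bullet> rword l x" unfolding x_def using rword_rev[OF l0] l by simp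
    also have "\<dots> = c \<bullet> x" using rword_inner[OF l(1)] .
    finally have e: "v c \<bullet> a = c \<bullet> x" .
    have "x \<in> uminus ` P \<longleftrightarrow> - x \<in> P" by (metis image_iff minus_minus)
    also have "\<dots> \<longleftrightarrow> c \<bullet> x < 0" using neg_root[OF xR] P_def by (auto simp: inner_minus_right)
    finally show ?thesis using e x_def by simp
  qed
  then show ?thesis unfolding inv_set_def l(2) inv_rword[OF l0] by blast
qed

lemma simple_negative:
  assumes "{a\<in>P. d \<bullet> a < 0} \<noteq> {}" shows "\<exists>e\<in>simple. d \<bullet> e < 0"
proof (rule ccontr)
  assume "\<not> ?thesis"
  then have nn: "\<forall>e\<in>simple. 0 \<le> d \<bullet> e" by (auto simp: not_less)
  have "0 \<le> d \<bullet> b" if b: "b \<in> P" for b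
  proof -
    obtain f where f: "\<forall>e. 0 \<le> f e" "b = (\<Sum>e\<in>simple. f e *\<^sub>R e)" using pos_cone[OF b] by blast
    have "d \<bullet> b = (\<Sum>e\<in>simple. f e * (d \<bullet> e))" by (subst f(2)) (simp add: inner_sum_right)
    also have "\<dots> \<ge> 0" using f(1) nn by (intro sum_nonneg) simp
    finally show ?thesis .
  qed
  then show False using assms by (auto simp: not_less[symmetric])
qed

text \<open>Reflecting d in a simple root e with d \<bullet> e < 0 decreases the number of positive
  roots negative on d (s_e permutes P - {e} and changes the sign on e).\<close>
lemma refl_fewer_negatives:
  assumes e: "e \<in> simple" "d \<bullet> e < 0"
  shows "card {a\<in>P. refl e d \<bullet> a < 0} < card {a\<in>P. d \<bullet> a < 0}"
proof -
  have e0: "e \<noteq> 0" using e(1) simple_roots root_nonzero by blast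
  have finN: "finite {a\<in>P. d \<bullet> a < 0}" using finite_roots pos_roots by (auto intro: finite_subset)
  have "{a\<in>P. refl e d \<bullet> a < 0} \<subseteq> refl e ` ({a\<in>P. d \<bullet> a < 0} - {e})"
  proof
    fix a assume a: "a \<in> {a\<in>P. refl e d \<bullet> a < 0}"
    have ae: "a \<noteq> e" using a e(2) refl_self[OF e0] refl_adjoint[OF e0, of d e] by auto
    have "- e \<notin> P" using pos_not_neg e(1) simple_pos by blast
    then have "refl e a \<noteq> e" using a refl_involution[OF e0, of a] refl_self[OF e0] by auto
    moreover have "refl e a \<in> P" using simple_refl_pos[OF e(1) _ ae] a by blast
    ultimately have "refl e a \<in> {a\<in>P. d \<bullet> a < 0} - {e}" using a refl_adjoint[OF e0] by auto
    moreover have "a = refl e (refl e a)" using refl_involution[OF e0] by simp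
    ultimately show "a \<in> refl e ` ({a\<in>P. d \<bullet> a < 0} - {e})" by blast
  qed
  then have "card {a\<in>P. refl e d \<bullet> a < 0} \<le> card (refl e ` ({a\<in>P. d \<bullet> a < 0} - {e}))"
    using finN by (intro card_mono) auto
  also have "\<dots> \<le> card ({a\<in>P. d \<bullet> a < 0} - {e})" using finN by (intro card_image_le) auto
  also have "\<dots> < card {a\<in>P. d \<bullet> a < 0}"
    using finN e simple_pos by (intro card_Diff1_less) auto
  finally show ?thesis .
qed

lemma chamber_exists:
  assumes "\<forall>a\<in>R. d \<bullet> a \<noteq> 0"
  shows "\<exists>v\<in>weyl R. \<forall>a\<in>R. 0 < v c \<bullet> a \<longleftrightarrow> 0 < d \<bullet> a"
  using assms
proof (induction "card {a\<in>P. d \<bullet> a < 0}" arbitrary: d rule: less_induct)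
  case less
  show ?case
  proof (cases "{a\<in>P. d \<bullet> a < 0} = {}")
    case True
    then have "{a\<in>P. id c \<bullet> a < 0} = {a\<in>P. d \<bullet> a < 0}" using P_def by auto
    then have "\<forall>a\<in>R. 0 < id c \<bullet> a \<longleftrightarrow> 0 < d \<bullet> a"
      using same_chamber_iff[of "id c" d] generic less.prems by simp
    then show ?thesis using weyl_id by blast
  next
    case False
    then obtain e where e: "e \<in> simple" "d \<bullet> e < 0" using simple_negative by blast
    have eR: "e \<in> R" and e0: "e \<noteq> 0" using e(1) simple_roots root_nonzero by auto
    have adj: "\<And>x a. refl e x \<bullet> a = x \<bullet> refl e a" using refl_adjoint[OF e0] .
    have "\<forall>a\<in>R. refl e d \<bullet> a \<noteq> 0" using less.prems adj refl_closed[OF eR] by simp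
    then obtain v' where v': "v' \<in> weyl R" "\<forall>a\<in>R. 0 < v' c \<bullet> a \<longleftrightarrow> 0 < refl e d \<bullet> a"
      using less.hyps refl_fewer_negatives[OF e] by blast
    have "0 < refl e (v' c) \<bullet> a \<longleftrightarrow> 0 < d \<bullet> a" if aR: "a \<in> R" for a
    proof -
      have "0 < refl e (v' c) \<bullet> a \<longleftrightarrow> 0 < v' c \<bullet> refl e a" using adj by simp
      also have "\<dots> \<longleftrightarrow> 0 < refl e d \<bullet> refl e a" using v'(2) refl_closed[OF eR aR] by blast
      also have "\<dots> \<longleftrightarrow> 0 < d \<bullet> a" using adj refl_involution[OF e0] by simp
      finally show ?thesis .
    qed
    then show ?thesis using weyl_step[OF eR v'(1)] by (intro bexI[of _ "refl e \<circ> v'"]) auto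
  qed
qed

lemma chamber_unique:
  assumes v1: "v1 \<in> weyl R" and v2: "v2 \<in> weyl R"
    and s: "\<forall>a\<in>R. 0 < v1 c \<bullet> a \<longleftrightarrow> 0 < v2 c \<bullet> a"
  shows "v1 = v2"
proof -
  obtain l1 where l1: "set l1 \<subseteq> simple" "v1 = rword l1" using weyl_simple_word[OF v1] by blast
  obtain l2 where l2: "set l2 \<subseteq> simple" "v2 = rword l2" using weyl_simple_word[OF v2] by blast
  have l1R: "set l1 \<subseteq> R" and l2R: "set l2 \<subseteq> R" using l1 l2 simple_roots by auto
  define u where "u = rword (rev l1 @ l2)"
  have "u b \<in> P" if b: "b \<in> P" for b
  proof -
    have bR: "b \<in> R" using b pos_roots by blast
    have "v2 c \<bullet> v2 b = c \<bullet> b" using rword_inner[OF l2R] l2 by simp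
    then have "0 < v1 c \<bullet> v2 b" using pos_inner[OF b] s rword_root[OF l2R bR] l2 by auto
    also have "v1 c \<bullet> v2 b = rword (rev l1) (v1 c) \<bullet> rword (rev l1) (v2 b)"
      using rword_inner[of "rev l1"] l1R by simp
    also have "\<dots> = c \<bullet> u b"
      unfolding u_def using l1 l2 rword_rev[OF word_nonzero[OF l1R]] by (simp add: rword_append)
    finally have "0 < c \<bullet> u b" .
    moreover have "u b \<in> R" unfolding u_def using rword_root[OF _ bR] l1R l2R by simp
    ultimately show "u b \<in> P" using P_def by blast
  qed
  then have u: "u = id" using word_stabilizing_pos l1 l2 unfolding u_def by auto
  show ?thesis
  proof
    fix x
    have "v2 x = rword l1 (u x)"
      unfolding u_def using l2 rword_rev[OF word_nonzero[OF l1R]] by (simp add: rword_append)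
    then show "v1 x = v2 x" using u l1 by simp
  qed
qed

lemma unique_weyl_with_inversions:
  assumes gd: "\<forall>a\<in>R. d \<bullet> a \<noteq> 0"
  shows "\<exists>!v. v \<in> weyl R \<and> inv_set P v = {a\<in>P. d \<bullet> a < 0}"
proof -
  have iff: "inv_set P v = {a\<in>P. d \<bullet> a < 0} \<longleftrightarrow> (\<forall>a\<in>R. 0 < v c \<bullet> a \<longleftrightarrow> 0 < d \<bullet> a)"
    if "v \<in> weyl R" for v
    using inv_set_weyl[OF that] same_chamber_iff[OF weyl_generic[OF that] gd] by simp
  obtain v where "v \<in> weyl R" "\<forall>a\<in>R. 0 < v c \<bullet> a \<longleftrightarrow> 0 < d \<bullet> a"
    using chamber_exists[OF gd] by blast
  then show ?thesis using iff chamber_unique by (intro ex1I[of _ v]) auto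
qed

lemma restrict_subspace:
  assumes "subspace U" shows "pos_root_system (R \<inter> U) (P \<inter> U) c"
proof
  show "refl a b \<in> R \<inter> U" if "a \<in> R \<inter> U" "b \<in> R \<inter> U" for a b
    using that refl_closed assms unfolding refl_def by (simp add: subspace_diff subspace_scale)
qed (use finite_roots zero_notin cartan_int reduced generic P_def in auto)

end

lemma pos_root_system_of:
  assumes "root_system R" and "positive_system R P"
  obtains c where "pos_root_system R P c"
  using assms unfolding root_system_def positive_system_def pos_root_system_def by blast

text \<open>fl_U(w) is well defined: it lies in W_U and its inversion set is I(w) \<inter> U.
  Both conditions single out the unique element of W_U whose chamber contains w c.\<close>
lemma flat_U_inversions:
  assumes "pos_root_system R P c" and w: "w \<in> weyl R" and "subspace U"
  shows "flat_U R P U w \<in> weyl (R \<inter> U) \<and> inv_set (P \<inter> U) (flat_U R P U w) = inv_set P w \<inter> U"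
proof -
  interpret full: pos_root_system R P c by fact
  interpret sub: pos_root_system "R \<inter> U" "P \<inter> U" c
    using full.restrict_subspace \<open>subspace U\<close> .
  have "\<forall>a\<in>R \<inter> U. w c \<bullet> a \<noteq> 0" using full.weyl_generic[OF w] by blast
  moreover have "inv_set P w \<inter> U = {a\<in>P \<inter> U. w c \<bullet> a < 0}"
    using full.inv_set_weyl[OF w] by blast
  ultimately show ?thesis
    unfolding flat_U_def using theI'[OF sub.unique_weyl_with_inversions] by simp
qed

section \<open>Flats of central arrangements\<close>

definition linear_arrangement :: "'a::euclidean_space set set \<Rightarrow> bool" where
  "linear_arrangement A \<longleftrightarrow> (\<forall>H\<in>A. \<exists>\<alpha>. \<alpha> \<noteq> 0 \<and> H = hyperplane \<alpha>)"

definition subspace_sum :: "'a::euclidean_space set \<Rightarrow> 'a set \<Rightarrow> 'a set" where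
  "subspace_sum M Y = {x + y | x y. x \<in> M \<and> y \<in> Y}"

lemma flats_iff: "X \<in> flats A \<longleftrightarrow> X = \<Inter>{H\<in>A. X \<subseteq> H}"
proof
  assume "X \<in> flats A"
  then obtain S where S: "S \<subseteq> A" "X = \<Inter>S" unfolding flats_def by auto
  show "X = \<Inter>{H\<in>A. X \<subseteq> H}"
  proof
    show "\<Inter>{H\<in>A. X \<subseteq> H} \<subseteq> X" using S by auto
  qed auto
next
  assume "X = \<Inter>{H\<in>A. X \<subseteq> H}"
  then show "X \<in> flats A" unfolding flats_def by blast
qed

lemma flats_Inter: assumes "F \<subseteq> flats A" shows "\<Inter>F \<in> flats A"
proof -
  have "\<Inter>{H\<in>A. \<Inter>F \<subseteq> H} \<subseteq> Y" if Y: "Y \<in> F" for Y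
  proof -
    have "{H\<in>A. Y \<subseteq> H} \<subseteq> {H\<in>A. \<Inter>F \<subseteq> H}" using Y by blast
    then have "\<Inter>{H\<in>A. \<Inter>F \<subseteq> H} \<subseteq> \<Inter>{H\<in>A. Y \<subseteq> H}" by (rule Inter_anti_mono)
    also have "\<dots> = Y" using Y assms flats_iff by blast
    finally show ?thesis .
  qed
  then have "\<Inter>F = \<Inter>{H\<in>A. \<Inter>F \<subseteq> H}" by blast
  then show ?thesis using flats_iff by blast
qed

lemma flats_UNIV: "UNIV \<in> flats A"
  unfolding flats_def by (rule CollectI, rule exI[of _ "{}"]) auto

lemma flats_bot: "\<Inter>A \<in> flats A"
  unfolding flats_def by blast

lemma flats_hyperplane: "H \<in> A \<Longrightarrow> H \<in> flats A"
  unfolding flats_def by (rule CollectI, rule exI[of _ "{H}"]) auto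

lemma flats_bot_le: "Y \<in> flats A \<Longrightarrow> \<Inter>A \<subseteq> Y"
  unfolding flats_def by blast

lemma flats_subspace: "linear_arrangement A \<Longrightarrow> X \<in> flats A \<Longrightarrow> subspace X"
  unfolding flats_def linear_arrangement_def hyperplane_def
  by (force intro!: subspace_Inter simp: subspace_hyperplane)

lemma subspace_sum_subspace: "subspace M \<Longrightarrow> subspace Y \<Longrightarrow> subspace (subspace_sum M Y)"
  unfolding subspace_sum_def by (rule subspace_sums)

lemma subspace_sum_le: "subspace Z \<Longrightarrow> M \<subseteq> Z \<Longrightarrow> Y \<subseteq> Z \<Longrightarrow> subspace_sum M Y \<subseteq> Z"
  unfolding subspace_sum_def by (auto intro: subspace_add)

lemma subspace_sum_ge1: "subspace Y \<Longrightarrow> M \<subseteq> subspace_sum M Y"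
  unfolding subspace_sum_def by (force dest: subspace_0)

lemma subspace_sum_ge2: "subspace M \<Longrightarrow> Y \<subseteq> subspace_sum M Y"
  unfolding subspace_sum_def by (force dest: subspace_0)

lemma subspace_sum_mono: "M \<subseteq> M' \<Longrightarrow> subspace_sum M Y \<subseteq> subspace_sum M' Y"
  unfolding subspace_sum_def by blast

lemma dim_subspace_sum:
  "subspace M \<Longrightarrow> subspace Y \<Longrightarrow> dim (subspace_sum M Y) + dim (M \<inter> Y) = dim M + dim Y"
  unfolding subspace_sum_def by (rule dim_sums_Int)

lemma dim_le_DIM: "dim (X::'a::euclidean_space set) \<le> DIM('a)"
  by (metis dim_subset_UNIV)

lemma flat_meet_flat: "flat_meet A M Y \<in> flats A"
  unfolding flat_meet_def by (rule flats_Inter) auto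

lemma subspace_sum_le_meet:
  assumes "linear_arrangement A" "subspace M" "subspace Y"
  shows "subspace_sum M Y \<subseteq> flat_meet A M Y"
  unfolding flat_meet_def using flats_subspace[OF assms(1)] subspace_sum_le assms by blast

text \<open>By Grassmann's formula, a flat M is modular iff M + Y is a flat for every flat Y.\<close>
lemma modular_iff:
  assumes h: "linear_arrangement A" and M: "M \<in> flats A"
  shows "modular_flat A M \<longleftrightarrow> (\<forall>Y\<in>flats A. subspace_sum M Y \<in> flats A)"
proof
  assume mod: "modular_flat A M"
  show "\<forall>Y\<in>flats A. subspace_sum M Y \<in> flats A"
  proof
    fix Y assume Y: "Y \<in> flats A"
    have sM: "subspace M" and sY: "subspace Y" using flats_subspace[OF h] M Y by auto
    have "rk M + rk Y = rk (flat_meet A M Y) + rk (M \<inter> Y)"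
      using mod Y unfolding modular_flat_def flat_join_def by auto
    then have "dim M + dim Y = dim (flat_meet A M Y) + dim (M \<inter> Y)"
      using dim_le_DIM[of M] dim_le_DIM[of Y] dim_le_DIM[of "flat_meet A M Y"] dim_le_DIM[of "M \<inter> Y"]
      unfolding rk_def by linarith
    then have "dim (flat_meet A M Y) \<le> dim (subspace_sum M Y)"
      using dim_subspace_sum[OF sM sY] by linarith
    then have "subspace_sum M Y = flat_meet A M Y"
      by (rule subspace_dim_equal[OF subspace_sum_subspace[OF sM sY]
            flats_subspace[OF h flat_meet_flat] subspace_sum_le_meet[OF h sM sY]])
    then show "subspace_sum M Y \<in> flats A" using flat_meet_flat by metis
  qed
next
  assume all: "\<forall>Y\<in>flats A. subspace_sum M Y \<in> flats A"
  show "modular_flat A M" unfolding modular_flat_def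
  proof (intro conjI M ballI)
    fix Y assume Y: "Y \<in> flats A"
    have sM: "subspace M" and sY: "subspace Y" using flats_subspace[OF h] M Y by auto
    have "flat_meet A M Y \<subseteq> subspace_sum M Y"
      unfolding flat_meet_def using all Y subspace_sum_ge1[OF sY] subspace_sum_ge2[OF sM] by blast
    then have e: "flat_meet A M Y = subspace_sum M Y" using subspace_sum_le_meet[OF h sM sY] by blast
    show "rk M + rk Y = rk (flat_meet A M Y) + rk (flat_join M Y)"
      unfolding e rk_def flat_join_def
      using dim_subspace_sum[OF sM sY] dim_le_DIM[of M] dim_le_DIM[of Y]
        dim_le_DIM[of "subspace_sum M Y"] dim_le_DIM[of "M \<inter> Y"] by linarith
  qed
qed

section \<open>Maximal chains of flats\<close>

lemma maximal_chain_insert: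
  assumes "maximal_chain A C" "Z \<in> flats A" "\<forall>M\<in>C. M \<subseteq> Z \<or> Z \<subseteq> M"
  shows "Z \<in> C"
proof -
  have "insert Z C \<subseteq> flats A" "flat_chain (insert Z C)"
    using assms unfolding maximal_chain_def flat_chain_def by auto
  then show ?thesis using assms(1) unfolding maximal_chain_def by blast
qed

lemma chain_subset_of_dim:
  fixes M N :: "'a::euclidean_space set"
  assumes "flat_chain C" "M \<in> C" "N \<in> C" "subspace M" "subspace N" "dim M \<le> dim N"
  shows "M \<subseteq> N"
  using assms subspace_dim_equal[of N M] unfolding flat_chain_def by blast

text \<open>Consecutive members of a maximal chain differ in dimension by at most one: otherwise
  M2 \<inter> H for a hyperplane H \<supseteq> M1 missing M2 could be inserted between them.\<close>
lemma maximal_chain_cover: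
  assumes h: "linear_arrangement A" and mc: "maximal_chain A C"
    and M1: "M1 \<in> C" and M2: "M2 \<in> C" and M12: "M1 \<subset> M2"
    and gap: "\<forall>N\<in>C. N \<subseteq> M1 \<or> M2 \<subseteq> N"
  shows "dim M2 \<le> dim M1 + 1"
proof -
  have CF: "C \<subseteq> flats A" using mc unfolding maximal_chain_def by blast
  have "M1 = \<Inter>{H\<in>A. M1 \<subseteq> H}" using flats_iff M1 CF by blast
  then obtain H where H: "H \<in> A" "M1 \<subseteq> H" "\<not> M2 \<subseteq> H" using M12 by blast
  obtain \<alpha> where \<alpha>: "\<alpha> \<noteq> 0" "H = hyperplane \<alpha>" using h H(1) unfolding linear_arrangement_def by blast
  define Z where "Z = M2 \<inter> H"
  have "Z \<in> flats A" unfolding Z_def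
    using flats_Inter[of "{M2, H}" A] flats_hyperplane[OF H(1)] M2 CF by auto
  moreover have "\<forall>N\<in>C. N \<subseteq> Z \<or> Z \<subseteq> N" using gap M12 H(2) unfolding Z_def by blast
  ultimately have "Z \<in> C" using maximal_chain_insert[OF mc] by blast
  moreover have "\<not> M2 \<subseteq> Z" using H(3) unfolding Z_def by blast
  ultimately have "Z \<subseteq> M1" using gap by blast
  have sM2: "subspace M2" and sH: "subspace H"
    using flats_subspace[OF h] M2 CF flats_hyperplane[OF H(1)] by auto
  have "dim H = DIM('a) - 1" using \<alpha> dim_hyperplane unfolding hyperplane_def by blast
  moreover have "dim (subspace_sum M2 H) + dim Z = dim M2 + dim H"
    unfolding Z_def by (rule dim_subspace_sum[OF sM2 sH])
  ultimately have "dim M2 \<le> dim Z + 1"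
    using dim_le_DIM[of "subspace_sum M2 H"] DIM_positive[where 'a='a] by linarith
  then show ?thesis using dim_subset[OF \<open>Z \<subseteq> M1\<close>] by linarith
qed

lemma maximal_chain_dims:
  fixes A :: "'a::euclidean_space set set"
  assumes h: "linear_arrangement A" and mc: "maximal_chain A C"
    and k1: "dim (\<Inter>A) \<le> k" and k2: "k \<le> DIM('a)"
  shows "\<exists>M\<in>C. dim M = k"
proof (rule ccontr)
  assume nok: "\<not> (\<exists>M\<in>C. dim M = k)"
  have CF: "C \<subseteq> flats A" and ch: "flat_chain C" using mc unfolding maximal_chain_def by auto
  have sub: "\<And>M. M \<in> C \<Longrightarrow> subspace M" using CF flats_subspace[OF h] by blast
  have botC: "\<Inter>A \<in> C" using maximal_chain_insert[OF mc flats_bot] flats_bot_le CF by blast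
  have topC: "UNIV \<in> C" using maximal_chain_insert[OF mc flats_UNIV] by blast
  have "dim (\<Inter>A) \<noteq> k" "dim (UNIV :: 'a set) \<noteq> k" using botC topC nok by blast+
  then have klo: "dim (\<Inter>A) < k" and khi: "k < DIM('a)" using k1 k2 by auto
  obtain M2 where M2: "M2 \<in> C \<and> k < dim M2"
    and M2min: "\<forall>N. N \<in> C \<and> k < dim N \<longrightarrow> dim M2 \<le> dim N"
    using ex_has_least_nat[of "\<lambda>N. N \<in> C \<and> k < dim N" UNIV dim] topC khi by auto
  obtain M1 where M1: "M1 \<in> C \<and> dim M1 < k"
    and M1max: "\<forall>N. N \<in> C \<and> dim N < k \<longrightarrow> DIM('a) - dim M1 \<le> DIM('a) - dim N"
    using ex_has_least_nat[of "\<lambda>N. N \<in> C \<and> dim N < k" "\<Inter>A" "\<lambda>N. DIM('a) - dim N"] botC klo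
    by auto
  have "\<forall>N\<in>C. N \<subseteq> M1 \<or> M2 \<subseteq> N"
  proof
    fix N assume N: "N \<in> C"
    show "N \<subseteq> M1 \<or> M2 \<subseteq> N"
    proof (cases "dim N < k")
      case True
      then have "dim N \<le> dim M1" using M1max N dim_le_DIM[of N] by force
      then show ?thesis using chain_subset_of_dim[OF ch N] M1 sub N by blast
    next
      case False
      moreover have "dim N \<noteq> k" using nok N by blast
      ultimately have "dim M2 \<le> dim N" using M2min N by auto
      then show ?thesis using chain_subset_of_dim[OF ch _ N] M2 sub N by blast
    qed
  qed
  moreover have "M1 \<subset> M2"
    using chain_subset_of_dim[OF ch, of M1 M2] M1 M2 sub by fastforce
  ultimately have "dim M2 \<le> dim M1 + 1" using maximal_chain_cover[OF h mc] M1 M2 by blast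
  then show False using M1 M2 by linarith
qed

lemma chain_dims_maximal:
  fixes A :: "'a::euclidean_space set set"
  assumes h: "linear_arrangement A" and CF: "C \<subseteq> flats A" and ch: "flat_chain C"
    and dims: "\<And>k. dim (\<Inter>A) \<le> k \<Longrightarrow> k \<le> DIM('a) \<Longrightarrow> \<exists>M\<in>C. dim M = k"
  shows "maximal_chain A C"
  unfolding maximal_chain_def
proof (intro conjI CF ch allI impI)
  fix C' assume C': "C \<subseteq> C' \<and> C' \<subseteq> flats A \<and> flat_chain C'"
  have "Z \<in> C" if Z: "Z \<in> C'" for Z
  proof -
    have ZF: "Z \<in> flats A" using C' Z by blast
    obtain M where M: "M \<in> C" "dim M = dim Z"
      using dims[of "dim Z"] dim_subset[OF flats_bot_le[OF ZF]] dim_le_DIM[of Z] by blast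
    have "subspace M" "subspace Z" using flats_subspace[OF h] ZF M CF by blast+
    moreover have "M \<in> C'" using M C' by blast
    ultimately have "M = Z"
      using chain_subset_of_dim[of C' M Z] chain_subset_of_dim[of C' Z M] C' Z M by auto
    then show "Z \<in> C" using M by simp
  qed
  then show "C' = C" using C' by blast
qed

lemma nat_ivt:
  fixes f :: "nat \<Rightarrow> nat"
  assumes "a \<le> b" "f a \<le> k" "k \<le> f b" "\<And>j. a \<le> j \<Longrightarrow> j < b \<Longrightarrow> f (Suc j) \<le> Suc (f j)"
  shows "\<exists>j. a \<le> j \<and> j \<le> b \<and> f j = k"
  using assms
proof (induction b)
  case 0 then show ?case by auto
next
  case (Suc b)
  show ?case
  proof (cases "a = Suc b")
    case True then show ?thesis using Suc.prems by auto
  next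
    case False
    then have ab: "a \<le> b" using Suc.prems by simp
    show ?thesis
    proof (cases "k \<le> f b")
      case True
      then show ?thesis using Suc.IH[OF ab Suc.prems(2) True] Suc.prems(4) by force
    next
      case False
      then have "f (Suc b) = k" using Suc.prems(3) Suc.prems(4)[of b] ab by simp
      then show ?thesis using Suc.prems(1) by blast
    qed
  qed
qed

section \<open>Localization preserves supersolvability\<close>

lemma localized_flats:
  assumes BA: "B \<subseteq> A" and cl: "\<And>H. H \<in> A \<Longrightarrow> \<Inter>B \<subseteq> H \<Longrightarrow> H \<in> B"
  shows "Y \<in> flats B \<longleftrightarrow> Y \<in> flats A \<and> \<Inter>B \<subseteq> Y"
proof
  assume "Y \<in> flats B"
  then obtain S where "S \<subseteq> B" "Y = \<Inter>S" unfolding flats_def by auto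
  then show "Y \<in> flats A \<and> \<Inter>B \<subseteq> Y" using BA unfolding flats_def by blast
next
  assume Y: "Y \<in> flats A \<and> \<Inter>B \<subseteq> Y"
  then have "Y = \<Inter>{H\<in>A. Y \<subseteq> H}" using flats_iff by blast
  moreover have "{H\<in>A. Y \<subseteq> H} = {H\<in>B. Y \<subseteq> H}" using Y cl BA by blast
  ultimately have "Y = \<Inter>{H\<in>B. Y \<subseteq> H}" by simp
  then show "Y \<in> flats B" using flats_iff by blast
qed

lemma modular_localized:
  assumes h: "linear_arrangement A" and BA: "B \<subseteq> A"
    and cl: "\<And>H. H \<in> A \<Longrightarrow> \<Inter>B \<subseteq> H \<Longrightarrow> H \<in> B"
    and mod: "modular_flat A M"
  shows "modular_flat B (subspace_sum M (\<Inter>B))"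
proof -
  define X where "X = \<Inter>B"
  have fB: "\<And>Y. Y \<in> flats B \<longleftrightarrow> Y \<in> flats A \<and> X \<subseteq> Y"
    using localized_flats[OF BA cl] X_def by blast
  have hB: "linear_arrangement B" using h BA unfolding linear_arrangement_def by blast
  have MA: "M \<in> flats A" using mod unfolding modular_flat_def by blast
  have XA: "X \<in> flats A" using fB[of X] flats_bot[of B] X_def by blast
  have sM: "subspace M" and sX: "subspace X" using flats_subspace[OF h] MA XA by auto
  have sums: "\<And>Y. Y \<in> flats A \<Longrightarrow> subspace_sum M Y \<in> flats A" using mod modular_iff[OF h MA] by blast
  have sum_flat: "subspace_sum M Y \<in> flats B" if "Y \<in> flats B" for Y
    using that fB sums subspace_sum_ge2[OF sM] by blast
  have NB: "subspace_sum M X \<in> flats B" using sum_flat fB XA by blast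
  have "subspace_sum (subspace_sum M X) Y \<in> flats B" if Y: "Y \<in> flats B" for Y
  proof -
    have sY: "subspace Y" and XY: "X \<subseteq> Y" using Y fB flats_subspace[OF h] by auto
    have sMY: "subspace (subspace_sum M Y)" using subspace_sum_subspace[OF sM sY] .
    have "Y \<subseteq> subspace_sum M Y" using subspace_sum_ge2[OF sM] .
    then have "subspace_sum M X \<subseteq> subspace_sum M Y"
      using subspace_sum_le[OF sMY] subspace_sum_ge1[OF sY] XY by blast
    then have "subspace_sum (subspace_sum M X) Y \<subseteq> subspace_sum M Y"
      using subspace_sum_le[OF sMY] \<open>Y \<subseteq> subspace_sum M Y\<close> by blast
    moreover have "subspace_sum M Y \<subseteq> subspace_sum (subspace_sum M X) Y"
      by (rule subspace_sum_mono[OF subspace_sum_ge1[OF sX]])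
    ultimately show ?thesis using sum_flat[OF Y] by auto
  qed
  then show ?thesis using modular_iff[OF hB NB] X_def by blast
qed

text \<open>The sums M + X, M in a maximal chain of A, realise every dimension from dim X up:
  dim (M + X) grows by at most one along the chain (Grassmann's formula).\<close>
lemma maximal_chain_sum_dims:
  fixes A :: "'a::euclidean_space set set"
  assumes h: "linear_arrangement A" and mc: "maximal_chain A C"
    and sX: "subspace X" and AX: "\<Inter>A \<subseteq> X" and k: "dim X \<le> k" "k \<le> DIM('a)"
  shows "\<exists>M\<in>C. dim (subspace_sum M X) = k"
proof -
  have CF: "C \<subseteq> flats A" and ch: "flat_chain C" using mc unfolding maximal_chain_def by auto
  have sub: "\<And>M. M \<in> C \<Longrightarrow> subspace M" using CF flats_subspace[OF h] by blast
  define d0 where "d0 = dim (\<Inter>A)"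
  have "\<forall>j\<in>{d0..DIM('a)}. \<exists>M\<in>C. dim M = j"
    using maximal_chain_dims[OF h mc] d0_def by simp
  then obtain Mj where "\<forall>j\<in>{d0..DIM('a)}. Mj j \<in> C \<and> dim (Mj j) = j"
    by (metis bchoice)
  then have Mj: "\<And>j. d0 \<le> j \<Longrightarrow> j \<le> DIM('a) \<Longrightarrow> Mj j \<in> C \<and> dim (Mj j) = j" by simp
  define f where "f j = dim (subspace_sum (Mj j) X)" for j
  have d0D: "d0 \<le> DIM('a)" unfolding d0_def by (rule dim_le_DIM)
  have "f d0 = dim X"
  proof -
    have M0: "Mj d0 \<in> C" "dim (Mj d0) = d0" using Mj[OF order.refl d0D] by auto
    moreover have "\<Inter>A \<subseteq> Mj d0" using flats_bot_le M0(1) CF by blast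
    ultimately have "\<Inter>A = Mj d0"
      using subspace_dim_equal[OF flats_subspace[OF h flats_bot] sub[OF M0(1)]] d0_def by simp
    then have "subspace_sum (Mj d0) X = X"
      using AX subspace_sum_le[OF sX _ order.refl] subspace_sum_ge2[OF sub[OF M0(1)], of X]
      by auto
    then show ?thesis unfolding f_def by simp
  qed
  moreover have "f DIM('a) = DIM('a)"
  proof -
    have M0: "Mj DIM('a) \<in> C" "dim (Mj DIM('a)) = DIM('a)" using Mj[OF d0D order.refl] by auto
    then have "Mj DIM('a) = UNIV" using subspace_dim_equal[OF sub subspace_UNIV] by simp
    then have "subspace_sum (Mj DIM('a)) X = UNIV" using subspace_sum_ge1[OF sX, of UNIV] by auto
    then show ?thesis unfolding f_def by simp
  qed
  moreover have "f (Suc j) \<le> Suc (f j)" if "d0 \<le> j" "j < DIM('a)" for j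
  proof -
    have a: "Mj j \<in> C" "dim (Mj j) = j" and b: "Mj (Suc j) \<in> C" "dim (Mj (Suc j)) = Suc j"
      using Mj that by auto
    then have "Mj j \<subseteq> Mj (Suc j)" using chain_subset_of_dim[OF ch] sub by simp
    then have "dim (Mj j \<inter> X) \<le> dim (Mj (Suc j) \<inter> X)" by (intro dim_subset) blast
    then show ?thesis
      using dim_subspace_sum[OF sub[OF a(1)] sX] dim_subspace_sum[OF sub[OF b(1)] sX] a b
      unfolding f_def by linarith
  qed
  ultimately obtain j where "d0 \<le> j" "j \<le> DIM('a)" "f j = k"
    using nat_ivt[of d0 "DIM('a)" f k] d0D k by auto
  then show ?thesis using Mj unfolding f_def by blast
qed

text \<open>Localization preserves supersolvability: adding \<Inter>B to the members of a modular
  maximal chain of A gives a modular maximal chain of B.\<close>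
lemma localization_supersolvable:
  fixes A :: "'a::euclidean_space set set"
  assumes h: "linear_arrangement A" and BA: "B \<subseteq> A"
    and cl: "\<And>H. H \<in> A \<Longrightarrow> \<Inter>B \<subseteq> H \<Longrightarrow> H \<in> B"
    and ss: "supersolvable A"
  shows "supersolvable B"
proof -
  define X where "X = \<Inter>B"
  obtain C where mc: "maximal_chain A C" and modC: "\<forall>M\<in>C. modular_flat A M"
    using ss unfolding supersolvable_def by blast
  have hB: "linear_arrangement B" using h BA unfolding linear_arrangement_def by blast
  have XA: "X \<in> flats A" and sX: "subspace X"
    using localized_flats[OF BA cl, of X] flats_bot[of B] flats_subspace[OF h] X_def by auto
  define C' where "C' = (\<lambda>M. subspace_sum M X) ` C"
  have mod': "\<forall>N\<in>C'. modular_flat B N"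
    using modular_localized[OF h BA cl] modC unfolding C'_def X_def by blast
  have "flat_chain C'"
    using mc subspace_sum_mono unfolding flat_chain_def maximal_chain_def C'_def by (smt (verit) imageE)
  moreover have "C' \<subseteq> flats B" using mod' unfolding modular_flat_def by blast
  moreover have "\<exists>N\<in>C'. dim N = k" if "dim (\<Inter>B) \<le> k" "k \<le> DIM('a)" for k
    using maximal_chain_sum_dims[OF h mc sX flats_bot_le[OF XA]] that X_def
    unfolding C'_def by auto
  ultimately have "maximal_chain B C'" using chain_dims_maximal[OF hB] by blast
  then show ?thesis using mod' unfolding supersolvable_def by blast
qed

lemma hyperplane_Inter_span:
  assumes "\<Inter>(hyperplane ` S) \<subseteq> hyperplane b"
  shows "b \<in> span S"
proof -
  obtain y z where yz: "y \<in> span S" "\<And>x. x \<in> span S \<Longrightarrow> orthogonal z x" "b = y + z"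
    using orthogonal_subspace_decomp_exists[of S b] by metis
  have "z \<in> hyperplane a" if "a \<in> S" for a
    using yz(2)[OF span_base[OF that]] unfolding hyperplane_def orthogonal_def
    by (simp add: inner_commute)
  then have "z \<in> \<Inter>(hyperplane ` S)" by blast
  then have "b \<bullet> z = 0" using assms unfolding hyperplane_def by blast
  moreover have "y \<bullet> z = 0" using yz(2)[OF yz(1)] unfolding orthogonal_def by (simp add: inner_commute)
  ultimately have "z \<bullet> z = 0" using yz(3) by (simp add: inner_add_left)
  then show ?thesis using yz by simp
qed

lemma hyperplanes_subspace_localization:
  assumes U: "subspace U" and H: "H \<in> hyperplane ` I" "\<Inter>(hyperplane ` (I \<inter> U)) \<subseteq> H"
  shows "H \<in> hyperplane ` (I \<inter> U)"
proof -
  from H(1) obtain b where b: "b \<in> I" "H = hyperplane b" by (rule imageE)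
  have "b \<in> span (I \<inter> U)" using hyperplane_Inter_span[of "I \<inter> U" b] H(2) b(2) by simp
  then have "b \<in> U" using span_minimal[OF _ U, of "I \<inter> U"] by blast
  then show ?thesis using b by simp
qed

lemma linear_arrangement_hyperplanes: "0 \<notin> I \<Longrightarrow> linear_arrangement (hyperplane ` I)"
  unfolding linear_arrangement_def by (metis (no_types, lifting) imageE)

theorem mainTheorem14:
  fixes R P U :: "'a::euclidean_space set" and w :: "'a \<Rightarrow> 'a"
  assumes "root_system R"
    and "positive_system R P"
    and "w \<in> weyl R"
    and "subspace U"
    and "supersolvable (inv_arrangement P w)"
  shows "supersolvable (inv_arrangement (P \<inter> U) (flat_U R P U w))"
proof -
  obtain c where sys: "pos_root_system R P c" using pos_root_system_of assms(1,2) by blast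
  define I where "I = inv_set P w"
  have "0 \<notin> I" using pos_root_system.pos_roots[OF sys] pos_root_system.zero_notin[OF sys]
    unfolding I_def inv_set_def by blast
  then have "supersolvable (hyperplane ` (I \<inter> U))"
    using localization_supersolvable[OF linear_arrangement_hyperplanes image_mono[OF Int_lower1]
        hyperplanes_subspace_localization[OF assms(4)]] assms(5)
    unfolding inv_arrangement_def I_def by blast
  moreover have "inv_arrangement (P \<inter> U) (flat_U R P U w) = hyperplane ` (I \<inter> U)"
    using flat_U_inversions[OF sys assms(3,4)] unfolding inv_arrangement_def I_def by simp
  ultimately show ?thesis by simp
qed

end
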